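(* Let $\mathcal{G}$ be a network of type $\mathcal{C}^1$ with exactly two stubborn agents $s_1,s_2$ and global communicator $m$, and let $\bar{G}_s$ be the signal flow graph derived from $\mathcal{G}$ as described in the context. Then, in $\bar{G}_s$: (1) for $i\in\{1,2\}$ and any node $e$, the sum of the path gains of all direct paths from $S_i$ to $e$ is at most $\dfrac{\beta_{s_i}(1-g_{e,e})}{1-g_{s_i,s_i}}$, and equality holds only when every simple path from $m$ to $e$ passes through $s_i$; (2) for any nodes $e,f$, the sum of the path gains of all direct paths from $e$ to $f$ is at most $\dfrac{1-g_{f,f}}{1-g_{e,e}}$, and equality holds only if every simple path from $m$ to $f$ passes through $e$.
   Context: Let $\mathcal{G}=(\mathcal{V},\mathcal{E})$, $\mathcal{V}=\{1,\dots,n\}$, be a directed graph, where an edge $(i,j)$ means information flows from $i$ to $j$. Its weighted adjacency matrix $W=[w_{ij}]$ is row-stochastic with $w_{ij}>0$ iff $(j,i)\in\mathcal{E}$ (self-loops allowed). Opinions follow the Friedkin–Johnsen model $\mathbf{x}(k+1)=(I-\beta)W\mathbf{x}(k)+\beta\mathbf{x}(0)$, $\beta=\mathrm{diag}(\beta_1,\dots,\beta_n)$, $\beta_i\in[0,1]$; exactly two agents $s_1,s_2$ are stubborn ($\beta_i>0$), with $\beta_{s_1},\beta_{s_2}\in(0,1)$. Type $\mathcal{C}^1$: $\mathcal{G}$ is strongly connected and some node $m$ lies on every cycle other than self-loops (a global communicator). A direct path is a path that does not pass through $m$. Signal flow graph: $G_s$ has nodes $1,\dots,n$ (node $i$ associated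 with the final opinion $x_i^*$ of agent $i$), two source nodes $S_1,S_2$ (initial opinions of $s_1,s_2$) and a sink $O$ (average final opinion), built from $\mathbf{x}^*=(I_n-\beta)W\mathbf{x}^*+\beta\mathbf{x}(0)$, $\bar{x}=\mathbb{1}_n^T\mathbf{x}^*/n$: for $i,j\in\{1,\dots,n\}$ there is a branch $(j,i)$ with gain $g_{i,j}=(1-\beta_i)w_{ij}$ whenever this is nonzero (so $g_{k,k}=(1-\beta_k)w_{kk}$ is the self-loop gain of $k$); there is a branch $(S_i,s_i)$ with gain $\beta_{s_i}$; and a branch $(j,O)$ with gain $1/n$ for each $j$. The graph $\bar{G}_s$ is obtained from $G_s$ by deleting every self-loop at a node $k$ and multiplying the gain of every outgoing branch of $k$ by $1/(1-g_{k,k})$. The gain of a path is the product of its branch gains (in $\bar{G}_s$); $g_{e,e}$ denotes the self-loop gain of $e$ in $G_s$. *)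

theory Defs
  imports Complex_Main
begin

(* Agents are the nodes 1..n. Graph G: edge relation E on {1..n}; (j,i) : E means
   information flows from j to i.  Node lists are used for paths/cycles. *)

definition chain_in :: "('a \<Rightarrow> 'a \<Rightarrow> bool) \<Rightarrow> 'a list \<Rightarrow> bool" where
  "chain_in R ps \<longleftrightarrow> (\<forall>k. Suc k < length ps \<longrightarrow> R (ps ! k) (ps ! Suc k))"

definition simple_path :: "(nat \<times> nat) set \<Rightarrow> nat list \<Rightarrow> nat \<Rightarrow> nat \<Rightarrow> bool" where
  "simple_path E ps a b \<longleftrightarrow> ps \<noteq> [] \<and> hd ps = a \<and> last ps = b \<and> distinct ps \<and>
     chain_in (\<lambda>u v. (u, v) \<in> E) ps"

definition is_cycle :: "(nat \<times> nat) set \<Rightarrow> nat list \<Rightarrow> bool" where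
  "is_cycle E cs \<longleftrightarrow> 2 \<le> length cs \<and> distinct cs \<and> chain_in (\<lambda>u v. (u, v) \<in> E) cs \<and>
     (last cs, hd cs) \<in> E"

definition strongly_connected :: "nat \<Rightarrow> (nat \<times> nat) set \<Rightarrow> bool" where
  "strongly_connected n E \<longleftrightarrow> (\<forall>i\<in>{1..n}. \<forall>j\<in>{1..n}. (i, j) \<in> E\<^sup>*)"

definition type_C1 :: "nat \<Rightarrow> (nat \<times> nat) set \<Rightarrow> nat \<Rightarrow> bool" where
  "type_C1 n E m \<longleftrightarrow> strongly_connected n E \<and> m \<in> {1..n} \<and>
     (\<forall>cs. is_cycle E cs \<longrightarrow> m \<in> set cs)"

(* branch gain of G_s from node j to node i:  g_{i,j} = (1 - beta_i) w_{ij} *)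
definition gain :: "(nat \<Rightarrow> nat \<Rightarrow> real) \<Rightarrow> (nat \<Rightarrow> real) \<Rightarrow> nat \<Rightarrow> nat \<Rightarrow> real" where
  "gain W \<beta> i j = (1 - \<beta> i) * W i j"

definition sfg_branch :: "(nat \<Rightarrow> nat \<Rightarrow> real) \<Rightarrow> (nat \<Rightarrow> real) \<Rightarrow> nat \<Rightarrow> nat \<Rightarrow> bool" where
  "sfg_branch W \<beta> j i \<longleftrightarrow> j \<noteq> i \<and> gain W \<beta> i j \<noteq> 0"

fun path_gain :: "(nat \<Rightarrow> nat \<Rightarrow> real) \<Rightarrow> (nat \<Rightarrow> real) \<Rightarrow> nat list \<Rightarrow> real" where
  "path_gain W \<beta> (u # v # vs) = gain W \<beta> v u / (1 - gain W \<beta> u u) * path_gain W \<beta> (v # vs)"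
| "path_gain W \<beta> _ = 1"

(* direct paths (no node equal to m) in bar G_s from agent node a to agent node b *)
definition direct_paths ::
  "nat \<Rightarrow> (nat \<Rightarrow> nat \<Rightarrow> real) \<Rightarrow> (nat \<Rightarrow> real) \<Rightarrow> nat \<Rightarrow> nat \<Rightarrow> nat \<Rightarrow> nat list set" where
  "direct_paths n W \<beta> m a b = {ps. ps \<noteq> [] \<and> hd ps = a \<and> last ps = b \<and> distinct ps \<and>
     set ps \<subseteq> {1..n} \<and> m \<notin> set ps \<and> chain_in (sfg_branch W \<beta>) ps}"

end

theory Submission
  imports Defs
begin

text \<open>Write \<open>c(e,y) = (1 - g\<^sub>y\<^sub>y) / (1 - g\<^sub>e\<^sub>e)\<close>. A direct path from \<open>e\<close> to \<open>y \<noteq> e\<close> ends with a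
  branch \<open>u \<rightarrow> y\<close> of gain \<open>g\<^sub>y\<^sub>u / (1 - g\<^sub>u\<^sub>u)\<close>, so by induction on the path length the direct
  path gains from \<open>e\<close> to \<open>y\<close> sum to at most
  \<open>\<Sum>\<^sub>u g\<^sub>y\<^sub>u/(1 - g\<^sub>u\<^sub>u) \<cdot> c(e,u) = \<Sum>\<^sub>u\<^sub>\<noteq>\<^sub>y g\<^sub>y\<^sub>u / (1 - g\<^sub>e\<^sub>e) \<le> c(e,y)\<close>, the last step because
  the gains out of row \<open>y\<close> sum to \<open>1 - \<beta>\<^sub>y \<le> 1\<close>. At \<open>m\<close> the sum is \<open>0 < c(e,m)\<close>, since
  direct paths avoid \<open>m\<close>, and the inequality stays strict along every branch into a node
  other than \<open>e\<close>; hence equality at \<open>f\<close> forces every path from \<open>m\<close> to \<open>f\<close> through \<open>e\<close>.\<close>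

lemma chain_in_iff_successively: "chain_in R xs \<longleftrightarrow> successively R xs"
  by (simp add: chain_in_def successively_conv_nth)

lemma successively_imp_rtrancl:
  assumes "successively R xs" and "xs \<noteq> []"
  shows "(hd xs, last xs) \<in> {(x, y). R x y}\<^sup>*"
  using assms
  by (induction R xs rule: successively.induct) (auto intro: converse_rtrancl_into_rtrancl)

lemma simple_path_rtrancl_avoiding:
  assumes "simple_path E ps a b" and "e \<notin> set ps"
  shows "(a, b) \<in> {(u, v). (u, v) \<in> E \<and> u \<noteq> v \<and> v \<noteq> e}\<^sup>*"
proof -
  have "successively (\<lambda>u v. (u, v) \<in> E \<and> u \<noteq> v \<and> v \<noteq> e) ps"
    using assms nth_mem unfolding successively_conv_nth simple_path_def chain_in_def
    by (fastforce simp: nth_eq_iff_index_eq)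
  then show ?thesis
    using successively_imp_rtrancl assms(1) unfolding simple_path_def by fastforce
qed

lemma exists_in_edge:
  assumes "(j, v) \<in> E\<^sup>*" and "j \<noteq> v"
  shows "\<exists>u. (u, v) \<in> E \<and> u \<noteq> v"
proof -
  have "(j, v) \<in> (E - Id)\<^sup>*"
    using assms(1) by (simp add: rtrancl_r_diff_Id)
  then show ?thesis
  proof (cases rule: rtranclE)
    case base
    then show ?thesis using assms(2) by simp
  next
    case (step u)
    then show ?thesis by blast
  qed
qed

lemma path_gain_snoc:
  assumes "qs \<noteq> []"
  shows "path_gain W \<beta> (qs @ [y]) =
    path_gain W \<beta> qs * (gain W \<beta> y (last qs) / (1 - gain W \<beta> (last qs) (last qs)))"
  using assms by (induction qs rule: induct_list012) (simp_all del: times_divide_eq_left)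

lemma length_le_if_direct_path:
  assumes "ps \<in> direct_paths n W \<beta> m a b"
  shows "length ps \<le> n"
proof -
  have "distinct ps" "set ps \<subseteq> {1..n}"
    using assms by (auto simp: direct_paths_def)
  then show ?thesis
    using card_mono[of "{1..n}" "set ps"] distinct_card[of ps] by simp
qed

lemma direct_paths_same_ends: "direct_paths n W \<beta> m e e \<subseteq> {[e]}"
proof
  fix ps assume ps: "ps \<in> direct_paths n W \<beta> m e e"
  then obtain xs where ps_eq: "ps = e # xs" and "last ps = e" "distinct ps"
    by (cases ps) (auto simp: direct_paths_def)
  then have "xs = []"
    by (metis distinct.simps(2) last_ConsR last_in_set)
  then show "ps \<in> {[e]}" using ps_eq by simp
qed

locale substochastic_sfg =
  fixes n :: nat and W :: "nat \<Rightarrow> nat \<Rightarrow> real" and \<beta> :: "nat \<Rightarrow> real" and m :: nat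
  assumes gain_nonneg: "i \<in> {1..n} \<Longrightarrow> j \<in> {1..n} \<Longrightarrow> 0 \<le> gain W \<beta> i j"
    and gain_row_sum_le: "i \<in> {1..n} \<Longrightarrow> (\<Sum>j=1..n. gain W \<beta> i j) \<le> 1"
    and self_loop_gain_less: "i \<in> {1..n} \<Longrightarrow> gain W \<beta> i i < 1"
begin

abbreviation g where "g \<equiv> gain W \<beta>"

definition bar_gain :: "nat \<Rightarrow> nat \<Rightarrow> real" where
  "bar_gain y u = g y u / (1 - g u u)"

definition direct_bound :: "nat \<Rightarrow> nat \<Rightarrow> real" where
  "direct_bound e y = (1 - g y y) / (1 - g e e)"

definition short_direct_paths :: "nat \<Rightarrow> nat \<Rightarrow> nat \<Rightarrow> nat list set" where
  "short_direct_paths k e y = {ps \<in> direct_paths n W \<beta> m e y. length ps \<le> k}"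

definition short_direct_gain :: "nat \<Rightarrow> nat \<Rightarrow> nat \<Rightarrow> real" where
  "short_direct_gain k e y = (\<Sum>ps\<in>short_direct_paths k e y. path_gain W \<beta> ps)"

lemma path_gain_Cons_Cons: "path_gain W \<beta> (u # v # vs) = bar_gain v u * path_gain W \<beta> (v # vs)"
  by (simp add: bar_gain_def)

lemma bar_gain_nonneg: "y \<in> {1..n} \<Longrightarrow> u \<in> {1..n} \<Longrightarrow> 0 \<le> bar_gain y u"
  using gain_nonneg self_loop_gain_less[of u] by (simp add: bar_gain_def)

lemma bar_gain_pos: "y \<in> {1..n} \<Longrightarrow> u \<in> {1..n} \<Longrightarrow> g y u \<noteq> 0 \<Longrightarrow> 0 < bar_gain y u"
  using gain_nonneg[of y u] self_loop_gain_less[of u] by (simp add: bar_gain_def)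

lemma direct_bound_pos: "e \<in> {1..n} \<Longrightarrow> y \<in> {1..n} \<Longrightarrow> 0 < direct_bound e y"
  using self_loop_gain_less by (simp add: direct_bound_def)

lemma direct_bound_same: "e \<in> {1..n} \<Longrightarrow> direct_bound e e = 1"
  using self_loop_gain_less[of e] by (simp add: direct_bound_def)

lemma bar_gain_direct_bound_sum_le:
  assumes e: "e \<in> {1..n}" and y: "y \<in> {1..n}"
  shows "(\<Sum>u\<in>{1..n}-{y}. bar_gain y u * direct_bound e u) \<le> direct_bound e y"
proof -
  have "(\<Sum>u\<in>{1..n}-{y}. bar_gain y u * direct_bound e u) = (\<Sum>u\<in>{1..n}-{y}. g y u) / (1 - g e e)"
    unfolding sum_divide_distrib
  proof (rule sum.cong[OF refl])
    fix u assume "u \<in> {1..n} - {y}"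
    then have "1 - g u u \<noteq> 0" using self_loop_gain_less[of u] by auto
    then show "bar_gain y u * direct_bound e u = g y u / (1 - g e e)"
      by (simp add: bar_gain_def direct_bound_def)
  qed
  also have "(\<Sum>u\<in>{1..n}-{y}. g y u) = (\<Sum>u=1..n. g y u) - g y y"
    using y by (simp add: sum_diff1)
  also have "\<dots> \<le> 1 - g y y"
    using gain_row_sum_le[OF y] by simp
  finally show ?thesis
    using self_loop_gain_less[OF e] by (simp add: direct_bound_def divide_right_mono)
qed

lemma path_gain_nonneg: "set ps \<subseteq> {1..n} \<Longrightarrow> 0 \<le> path_gain W \<beta> ps"
proof (induction ps rule: induct_list012)
  case (3 u v vs)
  then show ?case
    unfolding path_gain_Cons_Cons using bar_gain_nonneg[of v u] by simp
qed auto

lemma finite_short_direct_paths: "finite (short_direct_paths k e y)"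
proof -
  have "short_direct_paths k e y \<subseteq> {xs. set xs \<subseteq> {1..n} \<and> length xs \<le> k}"
    by (auto simp: short_direct_paths_def direct_paths_def)
  then show ?thesis
    using finite_lists_length_le[of "{1..n}" k] finite_subset by blast
qed

lemma short_direct_paths_all: "short_direct_paths n e y = direct_paths n W \<beta> m e y"
  using length_le_if_direct_path by (auto simp: short_direct_paths_def)

lemma short_direct_gain_0: "short_direct_gain 0 e y = 0"
  by (simp add: short_direct_gain_def short_direct_paths_def direct_paths_def)

lemma short_direct_gain_to_m: "short_direct_gain k e m = 0"
proof -
  have "short_direct_paths k e m = {}"
    by (auto simp: short_direct_paths_def direct_paths_def)
  then show ?thesis by (simp add: short_direct_gain_def)
qed

lemma short_direct_gain_same_le: "short_direct_gain k e e \<le> 1"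
proof -
  have "short_direct_gain k e e \<le> (\<Sum>ps\<in>{[e]}. path_gain W \<beta> ps)"
    unfolding short_direct_gain_def
    using direct_paths_same_ends[of n W \<beta> m e]
    by (intro sum_mono2) (auto simp: short_direct_paths_def)
  then show ?thesis by simp
qed

lemma short_direct_paths_Suc_snoc:
  assumes ps: "ps \<in> short_direct_paths (Suc k) e y" and "y \<noteq> e"
  obtains qs where "last qs \<in> {1..n} - {y}" "qs \<in> short_direct_paths k e (last qs)"
    "ps = qs @ [y]"
proof -
  define qs where "qs = butlast ps"
  have "ps \<noteq> []" and "last ps = y"
    using ps by (auto simp: short_direct_paths_def direct_paths_def)
  then have ps_eq: "ps = qs @ [y]"
    unfolding qs_def by (metis append_butlast_last_id)
  have "qs \<noteq> []"
    using ps ps_eq \<open>y \<noteq> e\<close> by (auto simp: short_direct_paths_def direct_paths_def)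
  have "set ps \<subseteq> {1..n}" "distinct ps"
    using ps by (auto simp: short_direct_paths_def direct_paths_def)
  then have "last qs \<in> {1..n} - {y}"
    using last_in_set[OF \<open>qs \<noteq> []\<close>] ps_eq by auto
  moreover have "qs \<in> short_direct_paths k e (last qs)"
    using ps \<open>qs \<noteq> []\<close> unfolding ps_eq
    by (auto simp: short_direct_paths_def direct_paths_def chain_in_iff_successively
        successively_append_iff)
  ultimately show ?thesis
    by (rule that[OF _ _ ps_eq])
qed

lemma short_direct_gain_Suc_le:
  assumes y: "y \<in> {1..n}" and "y \<noteq> e"
  shows "short_direct_gain (Suc k) e y \<le> (\<Sum>u\<in>{1..n}-{y}. bar_gain y u * short_direct_gain k e u)"
proof -
  let ?S = "SIGMA u:{1..n}-{y}. short_direct_paths k e u"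
  have "short_direct_gain (Suc k) e y \<le> (\<Sum>x\<in>?S. bar_gain y (fst x) * path_gain W \<beta> (snd x))"
    unfolding short_direct_gain_def
  proof (rule sum_le_included[where i = "\<lambda>x. snd x @ [y]"])
    show "finite (short_direct_paths (Suc k) e y)" "finite ?S"
      by (auto simp: finite_short_direct_paths)
    show "\<forall>x\<in>?S. 0 \<le> bar_gain y (fst x) * path_gain W \<beta> (snd x)"
      using y by (auto intro!: mult_nonneg_nonneg bar_gain_nonneg path_gain_nonneg
          simp: short_direct_paths_def direct_paths_def)
    show "\<forall>ps\<in>short_direct_paths (Suc k) e y. \<exists>x\<in>?S.
        snd x @ [y] = ps \<and> path_gain W \<beta> ps \<le> bar_gain y (fst x) * path_gain W \<beta> (snd x)"
    proof
      fix ps assume "ps \<in> short_direct_paths (Suc k) e y"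
      then obtain qs where qs: "last qs \<in> {1..n} - {y}" "qs \<in> short_direct_paths k e (last qs)"
          "ps = qs @ [y]"
        using short_direct_paths_Suc_snoc \<open>y \<noteq> e\<close> by blast
      then have "path_gain W \<beta> ps = bar_gain y (last qs) * path_gain W \<beta> qs"
        using path_gain_snoc[of qs W \<beta> y]
        by (auto simp: bar_gain_def short_direct_paths_def direct_paths_def)
      then show "\<exists>x\<in>?S. snd x @ [y] = ps \<and>
          path_gain W \<beta> ps \<le> bar_gain y (fst x) * path_gain W \<beta> (snd x)"
        using qs by (intro bexI[of _ "(last qs, qs)"]) auto
    qed
  qed
  also have "\<dots> = (\<Sum>u\<in>{1..n}-{y}. \<Sum>qs\<in>short_direct_paths k e u. bar_gain y u * path_gain W \<beta> qs)"
    using sum.Sigma[of "{1..n}-{y}" "short_direct_paths k e" "\<lambda>u qs. bar_gain y u * path_gain W \<beta> qs"]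
    by (simp add: finite_short_direct_paths case_prod_unfold)
  also have "\<dots> = (\<Sum>u\<in>{1..n}-{y}. bar_gain y u * short_direct_gain k e u)"
    by (simp add: short_direct_gain_def sum_distrib_left)
  finally show ?thesis .
qed

lemma short_direct_gain_le:
  assumes "e \<in> {1..n}" and "y \<in> {1..n}"
  shows "short_direct_gain k e y \<le> direct_bound e y"
  using assms(2)
proof (induction k arbitrary: y)
  case 0
  then show ?case
    using direct_bound_pos[OF assms(1)] by (simp add: short_direct_gain_0 less_imp_le)
next
  case (Suc k)
  show ?case
  proof (cases "y = e")
    case True
    then show ?thesis
      using short_direct_gain_same_le direct_bound_same[OF assms(1)] by simp
  next
    case False
    have "short_direct_gain (Suc k) e y
        \<le> (\<Sum>u\<in>{1..n}-{y}. bar_gain y u * short_direct_gain k e u)"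
      using short_direct_gain_Suc_le Suc.prems False by blast
    also have "\<dots> \<le> (\<Sum>u\<in>{1..n}-{y}. bar_gain y u * direct_bound e u)"
      using Suc bar_gain_nonneg by (intro sum_mono mult_left_mono) auto
    also have "\<dots> \<le> direct_bound e y"
      using bar_gain_direct_bound_sum_le assms(1) Suc.prems by blast
    finally show ?thesis .
  qed
qed

lemma short_direct_gain_Suc_less:
  assumes e: "e \<in> {1..n}" and y: "y \<in> {1..n}" "y \<noteq> e"
    and u: "u \<in> {1..n}" "sfg_branch W \<beta> u y"
    and less: "short_direct_gain k e u < direct_bound e u"
  shows "short_direct_gain (Suc k) e y < direct_bound e y"
proof -
  have "short_direct_gain (Suc k) e y
      \<le> (\<Sum>v\<in>{1..n}-{y}. bar_gain y v * short_direct_gain k e v)"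
    using short_direct_gain_Suc_le y by blast
  also have "\<dots> < (\<Sum>v\<in>{1..n}-{y}. bar_gain y v * direct_bound e v)"
  proof (rule sum_strict_mono_ex1)
    show "\<forall>v\<in>{1..n}-{y}. bar_gain y v * short_direct_gain k e v \<le> bar_gain y v * direct_bound e v"
      using short_direct_gain_le[OF e] bar_gain_nonneg y by (auto intro: mult_left_mono)
    have "0 < bar_gain y u"
      using bar_gain_pos y u by (simp add: sfg_branch_def)
    then show "\<exists>v\<in>{1..n}-{y}. bar_gain y v * short_direct_gain k e v < bar_gain y v * direct_bound e v"
      using u less by (intro bexI[of _ u] mult_strict_left_mono) (auto simp: sfg_branch_def)
  qed simp
  also have "\<dots> \<le> direct_bound e y"
    using bar_gain_direct_bound_sum_le e y by blast
  finally show ?thesis .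
qed

lemma short_direct_gain_less:
  assumes e: "e \<in> {1..n}" and m: "m \<in> {1..n}"
    and reach: "(m, y) \<in> {(u, v). v \<in> {1..n} - {e} \<and> sfg_branch W \<beta> u v}\<^sup>*"
  shows "short_direct_gain k e y < direct_bound e y"
  using reach
proof (induction arbitrary: k rule: rtrancl_induct)
  case base
  then show ?case
    using direct_bound_pos[OF e m] by (simp add: short_direct_gain_to_m)
next
  case (step u y)
  have "u \<in> {1..n}"
    using step.hyps(1) m by (auto elim: rtranclE)
  show ?case
  proof (cases k)
    case 0
    then show ?thesis
      using direct_bound_pos[OF e] step.hyps(2) by (simp add: short_direct_gain_0)
  next
    case (Suc k')
    then show ?thesis
      using short_direct_gain_Suc_less[OF e _ _ \<open>u \<in> {1..n}\<close> _ step.IH] step.hyps(2) by auto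
  qed
qed

lemma direct_path_gain_sum_le:
  assumes "e \<in> {1..n}" and "f \<in> {1..n}"
  shows "(\<Sum>ps\<in>direct_paths n W \<beta> m e f. path_gain W \<beta> ps) \<le> direct_bound e f"
  using short_direct_gain_le[OF assms, of n] by (simp add: short_direct_gain_def short_direct_paths_all)

lemma mem_simple_path_if_direct_path_gain_sum_eq:
  assumes e: "e \<in> {1..n}" and m: "m \<in> {1..n}"
    and branch: "\<And>u v. (u, v) \<in> E \<Longrightarrow> u \<noteq> v \<Longrightarrow> v \<in> {1..n} \<and> sfg_branch W \<beta> u v"
    and eq: "(\<Sum>ps\<in>direct_paths n W \<beta> m e f. path_gain W \<beta> ps) = direct_bound e f"
    and path: "simple_path E ps m f"
  shows "e \<in> set ps"
proof (rule ccontr)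
  assume "e \<notin> set ps"
  then have "(m, f) \<in> {(u, v). (u, v) \<in> E \<and> u \<noteq> v \<and> v \<noteq> e}\<^sup>*"
    using simple_path_rtrancl_avoiding path by blast
  also have "\<dots> \<subseteq> {(u, v). v \<in> {1..n} - {e} \<and> sfg_branch W \<beta> u v}\<^sup>*"
    using branch by (intro rtrancl_mono) auto
  finally have "short_direct_gain n e f < direct_bound e f"
    using short_direct_gain_less[OF e m] by blast
  then show False
    using eq by (simp add: short_direct_gain_def short_direct_paths_all)
qed

end

lemma self_weight_less_one:
  fixes W :: "nat \<Rightarrow> nat \<Rightarrow> real"
  assumes sc: "strongly_connected n E" and n: "2 \<le> n" and v: "v \<in> {1..n}"
    and E_sub: "E \<subseteq> {1..n} \<times> {1..n}"
    and W_E: "\<forall>i\<in>{1..n}. \<forall>j\<in>{1..n}. (0 < W i j \<longleftrightarrow> (j, i) \<in> E)"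
    and W_nonneg: "\<forall>i\<in>{1..n}. \<forall>j\<in>{1..n}. 0 \<le> W i j"
    and W_row: "\<forall>i\<in>{1..n}. (\<Sum>j=1..n. W i j) = 1"
  shows "W v v < 1"
proof -
  obtain j where j: "j \<in> {1..n}" "j \<noteq> v"
  proof (cases "v = 1")
    case True
    then show ?thesis using that[of 2] n by auto
  next
    case False
    then show ?thesis using that[of 1] n v by auto
  qed
  then have "(j, v) \<in> E\<^sup>*"
    using sc v unfolding strongly_connected_def by blast
  then obtain u where uv: "(u, v) \<in> E" "u \<noteq> v"
    using exists_in_edge j(2) by metis
  then have u: "u \<in> {1..n}" "0 < W v u"
    using E_sub W_E v by blast+
  have "(\<Sum>j\<in>{v, u}. W v j) \<le> (\<Sum>j=1..n. W v j)"
    by (rule sum_mono2) (use u v W_nonneg in auto)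
  then show ?thesis
    using u uv W_row v by simp
qed

lemma substochastic_sfgI:
  assumes W_nonneg: "\<forall>i\<in>{1..n}. \<forall>j\<in>{1..n}. 0 \<le> W i j"
    and W_row: "\<forall>i\<in>{1..n}. (\<Sum>j=1..n. W i j) = 1"
    and beta_range: "\<forall>i\<in>{1..n}. 0 \<le> \<beta> i \<and> \<beta> i \<le> 1"
    and W_diag: "\<forall>i\<in>{1..n}. W i i < 1"
  shows "substochastic_sfg n W \<beta>"
proof
  fix i j assume "i \<in> {1..n}" "j \<in> {1..n}"
  then show "0 \<le> gain W \<beta> i j"
    using W_nonneg beta_range by (simp add: gain_def)
next
  fix i assume i: "i \<in> {1..n}"
  have "(\<Sum>j=1..n. gain W \<beta> i j) = 1 - \<beta> i"
    using W_row i by (simp add: gain_def sum_distrib_left[symmetric])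
  then show "(\<Sum>j=1..n. gain W \<beta> i j) \<le> 1"
    using beta_range i by simp
next
  fix i assume i: "i \<in> {1..n}"
  have "gain W \<beta> i i \<le> W i i"
    using beta_range W_nonneg i mult_left_le_one_le[of "W i i" "1 - \<beta> i"]
    by (simp add: gain_def)
  moreover have "W i i < 1"
    using W_diag i by blast
  ultimately show "gain W \<beta> i i < 1"
    by simp
qed

theorem lemma3:
  fixes n :: nat and W :: "nat \<Rightarrow> nat \<Rightarrow> real" and \<beta> :: "nat \<Rightarrow> real"
    and E :: "(nat \<times> nat) set" and m s1 s2 :: nat
  assumes E_sub: "E \<subseteq> {1..n} \<times> {1..n}"
    and W_E: "\<forall>i\<in>{1..n}. \<forall>j\<in>{1..n}. (0 < W i j \<longleftrightarrow> (j, i) \<in> E)"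
    and W_nonneg: "\<forall>i\<in>{1..n}. \<forall>j\<in>{1..n}. 0 \<le> W i j"
    and W_row: "\<forall>i\<in>{1..n}. (\<Sum>j=1..n. W i j) = 1"
    and beta_range: "\<forall>i\<in>{1..n}. 0 \<le> \<beta> i \<and> \<beta> i \<le> 1"
    and s_in: "s1 \<in> {1..n}" "s2 \<in> {1..n}" "s1 \<noteq> s2"
    and s_beta: "0 < \<beta> s1" "\<beta> s1 < 1" "0 < \<beta> s2" "\<beta> s2 < 1"
    and others: "\<forall>i\<in>{1..n}. i \<noteq> s1 \<and> i \<noteq> s2 \<longrightarrow> \<beta> i = 0"
    and C1: "type_C1 n E m"
  shows
    "(\<forall>s\<in>{s1, s2}. \<forall>e\<in>{1..n}.
        (\<Sum>ps\<in>direct_paths n W \<beta> m s e. \<beta> s * path_gain W \<beta> ps)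
          \<le> \<beta> s * (1 - gain W \<beta> e e) / (1 - gain W \<beta> s s)
      \<and> ((\<Sum>ps\<in>direct_paths n W \<beta> m s e. \<beta> s * path_gain W \<beta> ps)
            = \<beta> s * (1 - gain W \<beta> e e) / (1 - gain W \<beta> s s)
          \<longrightarrow> (\<forall>ps. simple_path E ps m e \<longrightarrow> s \<in> set ps)))
   \<and> (\<forall>e\<in>{1..n}. \<forall>f\<in>{1..n}.
        (\<Sum>ps\<in>direct_paths n W \<beta> m e f. path_gain W \<beta> ps)
          \<le> (1 - gain W \<beta> f f) / (1 - gain W \<beta> e e)
      \<and> ((\<Sum>ps\<in>direct_paths n W \<beta> m e f. path_gain W \<beta> ps)
            = (1 - gain W \<beta> f f) / (1 - gain W \<beta> e e)
          \<longrightarrow> (\<forall>ps. simple_path E ps m f \<longrightarrow> e \<in> set ps)))"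
proof -
  have m: "m \<in> {1..n}" and sc: "strongly_connected n E"
    using C1 by (auto simp: type_C1_def)
  have beta_less: "\<forall>i\<in>{1..n}. \<beta> i < 1"
    using others s_beta by fastforce
  have "\<forall>v\<in>{1..n}. W v v < 1"
    using self_weight_less_one[OF sc _ _ E_sub W_E W_nonneg W_row] s_in by auto
  then interpret substochastic_sfg n W \<beta> m
    using substochastic_sfgI W_nonneg W_row beta_range by blast
  have branch: "v \<in> {1..n} \<and> sfg_branch W \<beta> u v" if "(u, v) \<in> E" "u \<noteq> v" for u v
    using that E_sub W_E beta_less by (fastforce simp: sfg_branch_def gain_def)
  have bound_eq: "(1 - gain W \<beta> f f) / (1 - gain W \<beta> e e) = direct_bound e f" for e f
    by (simp add: direct_bound_def)
  have scaled_bound_eq: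
    "\<beta> s * (1 - gain W \<beta> e e) / (1 - gain W \<beta> s s) = \<beta> s * direct_bound s e" for s e
    by (simp add: direct_bound_def)
  have bounds: "(\<Sum>ps\<in>direct_paths n W \<beta> m e f. path_gain W \<beta> ps) \<le> direct_bound e f \<and>
      ((\<Sum>ps\<in>direct_paths n W \<beta> m e f. path_gain W \<beta> ps) = direct_bound e f
        \<longrightarrow> (\<forall>ps. simple_path E ps m f \<longrightarrow> e \<in> set ps))"
    if "e \<in> {1..n}" "f \<in> {1..n}" for e f
    using direct_path_gain_sum_le[OF that] mem_simple_path_if_direct_path_gain_sum_eq[OF that(1) m branch]
    by blast
  show ?thesis
    unfolding scaled_bound_eq bound_eq sum_distrib_left[symmetric]
    using bounds s_in s_beta by (auto simp: mult_le_cancel_left_pos)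
qed

end
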